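(* Let $m<n$ and let $\mathbf{A}\in\mathbb{R}^{m\times n}$ have rank $m$, partitioned as $\mathbf{A} = [\mathbf{X}\,|\,\mathbf{Y}]$ with $\mathbf{X}\in\mathbb{R}^{m\times m}$ invertible (the first $m$ columns form a full-rank square matrix) and $\mathbf{Y}\in\mathbb{R}^{m\times(n-m)}$. Let $\mathbf{A} = \mathbf{Q}\mathbf{R}$ be its QR decomposition with $\mathbf{Q}\in\mathbb{R}^{m\times m}$ orthogonal and $\mathbf{R}\in\mathbb{R}^{m\times n}$ upper triangular, partitioned as $\mathbf{R} = [\mathbf{U}\,|\,\mathbf{V}]$ with $\mathbf{U}\in\mathbb{R}^{m\times m}$ (upper triangular, invertible, $\mathbf{X}=\mathbf{Q}\mathbf{U}$) and $\mathbf{V}\in\mathbb{R}^{m\times(n-m)}$ ($\mathbf{Y}=\mathbf{Q}\mathbf{V}$). Suppose $\mathbf{A}'\mapsto(\mathbf{Q}(\mathbf{A}'),\mathbf{R}(\mathbf{A}'))$ is a differentiable map on a neighborhood of $\mathbf{A}$ giving such a decomposition for each $\mathbf{A}'$ (e.g. normalized so $\mathbf{R}$ has positive diagonal). Let $\bar{\mathbf{Q}}\in\mathbb{R}^{m\times m}$ and $\bar{\mathbf{R}} = [\bar{\mathbf{U}}\,|\,\bar{\mathbf{V}}]\in\mathbb{R}^{m\times n}$ be arbitrary upstream gradients, with $\bar{\mathbf{U}}\in\mathbb{R}^{m\times m}$, $\bar{\mathbf{V}}\in\mathbb{R}^{m\times(n-m)}$. Then the reverse-mode gradient is $\bar{\mathbf{A}}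 = [\bar{\mathbf{X}}\,|\,\bar{\mathbf{Y}}]$ with $$\bar{\mathbf{X}} = \left[\bar{\mathbf{Q}}_{prime} + \mathbf{Q}\,\mathrm{copyltu}(\mathbf{M})\right]\mathbf{U}^{-T},\qquad \bar{\mathbf{Y}} = \mathbf{Q}\bar{\mathbf{V}},$$ where $\bar{\mathbf{Q}}_{prime} = \bar{\mathbf{Q}} + \mathbf{Y}\bar{\mathbf{V}}^T$ and $\mathbf{M} = \mathbf{U}\bar{\mathbf{U}}^T - \bar{\mathbf{Q}}_{prime}^T\mathbf{Q}$.
   Context: Reverse-mode gradient: given a differentiable map $\mathbf{A}\mapsto(\mathbf{Q}(\mathbf{A}),\mathbf{R}(\mathbf{A}))$ and upstream matrices $\bar{\mathbf{Q}},\bar{\mathbf{R}}$ of the same shapes as $\mathbf{Q},\mathbf{R}$, the gradient $\bar{\mathbf{A}}$ is the unique matrix of the shape of $\mathbf{A}$ such that $\mathrm{Tr}(\bar{\mathbf{A}}^T d\mathbf{A}) = \mathrm{Tr}(\bar{\mathbf{Q}}^T d\mathbf{Q}) + \mathrm{Tr}(\bar{\mathbf{R}}^T d\mathbf{R})$ for every direction $d\mathbf{A}$, where $d\mathbf{Q}, d\mathbf{R}$ are the directional derivatives of $\mathbf{Q},\mathbf{R}$ at $\mathbf{A}$ in direction $d\mathbf{A}$. For a square matrix $\mathbf{M}$, $\mathrm{copyltu}(\mathbf{M})$ is the symmetric matrix with entries $\mathrm{copyltu}(\mathbf{M})_{ij} = \mathbf{M}_{\max(i,j),\min(i,j)}$;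 equivalently $\mathrm{copyltu}(\mathbf{M}) = \mathrm{sym}(\mathbf{M}\circ\mathbf{E})$, where $\mathrm{sym}(\mathbf{B}) = (\mathbf{B}+\mathbf{B}^T)/2$, $\circ$ is the Hadamard product and $\mathbf{E}$ has $e_{ij}=0$ if $i<j$, $1$ if $i=j$, $2$ if $i>j$. $\mathbf{U}^{-T} = (\mathbf{U}^{-1})^T$. *)

theory Defs
  imports "HOL-Analysis.Analysis"
begin

text \<open>An m x n matrix with n > m is represented with column index type 'm + 'k:
  the columns Inl j (j :: 'm) are the first m columns (in the order of 'm), the
  columns Inr j (j :: 'k) are the remaining n - m columns. So n - m = CARD('k) \<ge> 1.\<close>

definition left_block :: "('a::zero)^('m::finite + 'k::finite)^('r::finite) \<Rightarrow> 'a^'m^'r" where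
  "left_block A = (\<chi> i j. A $ i $ Inl j)"

definition right_block :: "('a::zero)^('m::finite + 'k::finite)^'r \<Rightarrow> 'a^'k^'r" where
  "right_block A = (\<chi> i j. A $ i $ Inr j)"

definition hcat :: "'a^'m^'r \<Rightarrow> 'a^'k^'r \<Rightarrow> 'a^('m::finite + 'k::finite)^'r" where
  "hcat X Y = (\<chi> i c. case c of Inl j \<Rightarrow> X $ i $ j | Inr j \<Rightarrow> Y $ i $ j)"

text \<open>R (m x n) upper triangular: entries below the diagonal vanish. Since every
  column Inr j has position \<ge> m > row index, only the left block is constrained.\<close>
definition upper_triangular_wide :: "real^('m::{finite,wellorder} + 'k::finite)^('m::{finite,wellorder}) \<Rightarrow> bool" where
  "upper_triangular_wide R \<longleftrightarrow> (\<forall>i j. j < i \<longrightarrow> R $ i $ Inl j = 0)"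

definition copyltu :: "real^('m::{finite,linorder})^('m::{finite,linorder}) \<Rightarrow> real^('m::{finite,linorder})^('m::{finite,linorder})" where
  "copyltu M = (\<chi> i j. M $ (max i j) $ (min i j))"

definition is_reverse_gradient ::
  "(real^'n^'r \<Rightarrow> real^'q^'p) \<Rightarrow> (real^'n^'r \<Rightarrow> real^'s^'t)
   \<Rightarrow> real^'q^'p \<Rightarrow> real^'s^'t \<Rightarrow> real^('n::finite)^('r::finite) \<Rightarrow> bool" where
  "is_reverse_gradient DQ DR Qbar Rbar Abar \<longleftrightarrow>
     (\<forall>dA. trace (transpose Abar ** dA) =
            trace (transpose Qbar ** DQ dA) + trace (transpose Rbar ** DR dA))"

end

theory Submission
  imports Defs
begin

text \<open>Differentiating A = QR and Q^T Q = I gives dA = dQ R + Q dR with W = Q^T dQ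
  skew-symmetric and dU upper triangular, so dX = Q (W + T) U with T = dU U^-1 upper
  triangular.  Pairing Xbar with dX, the symmetric matrix copyltu M is trace-orthogonal to the
  skew W, while against the upper triangular T it acts as M; the part U Ubar^T of M turns the
  T-term into tr(Ubar^T dU) and its other part cancels the T-contribution of Qbar'.  The
  correction Y Vbar^T in Qbar' cancels, by skew-symmetry of W once more, the contribution
  tr(Vbar^T W V) of dQ to the pairing of Ybar with dY = Q (W V + dV).\<close>

lemma matrix_add_rdistrib:
  "((A::'a::semiring_1^'n::finite^'m) + B) ** C = A ** C + B ** C"
  by (simp add: vec_eq_iff matrix_matrix_mult_def sum.distrib algebra_simps)

lemma matrix_diff_rdistrib:
  "((A::'a::ring_1^'n::finite^'m) - B) ** C = A ** C - B ** C"
  by (simp add: vec_eq_iff matrix_matrix_mult_def sum_subtractf algebra_simps)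

lemma matrix_uminus_left:
  "(- (A::'a::ring_1^'n::finite^'m)) ** B = - (A ** B)"
  by (simp add: vec_eq_iff matrix_matrix_mult_def sum_negf)

lemma transpose_add: "transpose ((A::'a::semiring_1^'n^'m) + B) = transpose A + transpose B"
  by (simp add: vec_eq_iff transpose_def)

lemma trace_uminus: "trace (- (A::'a::comm_ring_1^'n::finite^'n)) = - trace A"
  by (simp add: trace_def sum_negf)

lemma trace_transpose: "trace (transpose (A::'a::semiring_1^'n::finite^'n)) = trace A"
  by (simp add: trace_def transpose_def)

lemma trace_transpose_mult:
  "trace (transpose (B::'a::comm_semiring_1^'n::finite^'m::finite) ** C) =
     (\<Sum>i\<in>UNIV. \<Sum>j\<in>UNIV. B$i$j * C$i$j)"
  by (simp add: trace_def matrix_matrix_mult_def transpose_def sum.swap[where A = "UNIV::'n set"])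

lemma trace_transpose_mult_skew:
  fixes N W :: "'a::comm_ring_1^'n::finite^'n"
  assumes "transpose W = - W"
  shows "trace (transpose N ** W) = - trace (N ** W)"
proof -
  have "trace (N ** W) = trace (transpose (N ** W))" by (simp add: trace_transpose)
  also have "\<dots> = - trace (W ** transpose N)"
    by (simp add: matrix_transpose_mul assms matrix_uminus_left trace_uminus)
  finally show ?thesis by (simp add: trace_mul_sym[of W])
qed

lemma trace_symmetric_mult_skew:
  fixes C W :: "real^'n::finite^'n"
  assumes "transpose C = C" "transpose W = - W"
  shows "trace (C ** W) = 0"
  using trace_transpose_mult_skew[OF assms(2), of C] assms(1) by simp

lemma matrix_inv_invertible:
  assumes "invertible A"
  shows "A ** matrix_inv A = mat 1" "matrix_inv A ** A = mat 1"
  using someI_ex[OF assms[unfolded invertible_def]] by (simp_all add: matrix_inv_def)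

lemma bounded_bilinear_matrix_matrix_mult:
  "bounded_bilinear (\<lambda>(A::real^'n::finite^'m::finite) (B::real^'p::finite^'n). A ** B)"
proof -
  have "bilinear (\<lambda>(A::real^'n^'m) (B::real^'p^'n). A ** B)"
    unfolding bilinear_def
    by (auto intro!: linearI simp: vec_eq_iff matrix_matrix_mult_def sum_distrib_left
         sum.distrib algebra_simps scaleR_sum_right)
  then show ?thesis by (simp add: bilinear_conv_bounded_bilinear)
qed

lemma bounded_linear_transpose:
  "bounded_linear (transpose :: real^'n::finite^'m::finite \<Rightarrow> real^'m^'n)"
proof -
  have "linear (transpose :: real^'n^'m \<Rightarrow> real^'m^'n)"
    by (auto intro!: linearI simp: vec_eq_iff transpose_def)
  then show ?thesis by (simp add: linear_conv_bounded_linear)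
qed

lemma has_derivative_matrix_mult:
  assumes "(f has_derivative F) (at a)" "(g has_derivative G) (at a)"
  shows "((\<lambda>x. (f x :: real^'n::finite^'m::finite) ** (g x :: real^'p::finite^'n)) has_derivative
          (\<lambda>h. f a ** G h + F h ** g a)) (at a)"
  using bounded_bilinear.FDERIV[OF bounded_bilinear_matrix_matrix_mult assms] by simp

lemma has_derivative_unique_on_open:
  assumes "(f has_derivative F) (at a)" "(g has_derivative G) (at a)"
    and "open S" "a \<in> S" "\<And>x. x \<in> S \<Longrightarrow> f x = g x"
  shows "F = G"
proof -
  have "(g has_derivative F) (at a)"
    by (rule has_derivative_transform_within_open[OF assms(1,3,4)]) (use assms(5) in auto)
  then show ?thesis using assms(2) has_derivative_unique by blast
qed

lemma left_block_hcat [simp]: "left_block (hcat X Y) = X"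
  by (simp add: left_block_def hcat_def vec_eq_iff)

lemma right_block_hcat [simp]: "right_block (hcat X Y) = Y"
  by (simp add: right_block_def hcat_def vec_eq_iff)

lemma left_block_mult:
  "left_block ((B::'a::semiring_1^'r::finite^'p) ** C) = B ** left_block (C::'a^('m::finite + 'k::finite)^'r)"
  by (simp add: left_block_def matrix_matrix_mult_def vec_eq_iff)

lemma right_block_mult:
  "right_block ((B::'a::semiring_1^'r::finite^'p) ** C) = B ** right_block (C::'a^('m::finite + 'k::finite)^'r)"
  by (simp add: right_block_def matrix_matrix_mult_def vec_eq_iff)

lemma left_block_add:
  "left_block ((B::'a::monoid_add^('m::finite + 'k::finite)^'r) + C) = left_block B + left_block C"
  by (simp add: left_block_def vec_eq_iff)

lemma right_block_add:
  "right_block ((B::'a::monoid_add^('m::finite + 'k::finite)^'r) + C) = right_block B + right_block C"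
  by (simp add: right_block_def vec_eq_iff)

lemma trace_transpose_mult_blocks:
  fixes B D :: "'a::comm_semiring_1^('m::finite + 'k::finite)^'r::finite"
  shows "trace (transpose B ** D) = trace (transpose (left_block B) ** left_block D)
          + trace (transpose (right_block B) ** right_block D)"
proof -
  have "(\<Sum>c\<in>(UNIV::('m + 'k) set). h c) = (\<Sum>j\<in>UNIV. h (Inl j)) + (\<Sum>j\<in>UNIV. h (Inr j))"
    for h :: "'m + 'k \<Rightarrow> 'a"
    by (subst UNIV_Plus_UNIV[symmetric], subst sum.Plus) (auto simp: o_def)
  then show ?thesis
    unfolding trace_transpose_mult left_block_def right_block_def by (simp add: sum.distrib)
qed

definition upper_triangular :: "('a::zero)^('n::{finite,linorder})^('n::{finite,linorder}) \<Rightarrow> bool" where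
  "upper_triangular U \<longleftrightarrow> (\<forall>i j. j < i \<longrightarrow> U$i$j = 0)"

lemma upper_triangular_wide_iff:
  "upper_triangular_wide R \<longleftrightarrow> upper_triangular (left_block R)"
  by (simp add: upper_triangular_wide_def upper_triangular_def left_block_def)

lemma upper_triangular_mult:
  fixes U T :: "'a::semiring_1^('n::{finite,linorder})^('n::{finite,linorder})"
  assumes "upper_triangular U" "upper_triangular T"
  shows "upper_triangular (U ** T)"
  unfolding upper_triangular_def matrix_matrix_mult_def
proof (intro allI impI, simp, rule sum.neutral, rule ballI)
  fix i j k :: 'n
  assume "j < i"
  then show "U$i$k * T$k$j = 0"
    using assms by (cases "k < i") (auto simp: upper_triangular_def not_less)
qed

text \<open>If L had a nonzero entry below the diagonal in column j, the lowest such row p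
  would give (U L)$p$j = U$p$p * L$p$j \<noteq> 0.\<close>
lemma upper_triangular_right_inverse:
  fixes U L :: "'a::field^('n::{finite,wellorder})^('n::{finite,wellorder})"
  assumes up: "upper_triangular U" and inv: "U ** L = mat 1"
  shows "upper_triangular L"
  unfolding upper_triangular_def
proof (intro allI impI, rule ccontr)
  fix i j :: 'n
  assume ji: "j < i" and nz: "L$i$j \<noteq> 0"
  let ?B = "{i. j < i \<and> L$i$j \<noteq> 0}"
  define p where "p = Max ?B"
  have pB: "p \<in> ?B" unfolding p_def by (rule Max_in) (use ji nz in auto)
  have below_p: "L$k$j = 0" if "p < k" for k
  proof (rule ccontr)
    assume "L$k$j \<noteq> 0"
    then have "k \<in> ?B" using that pB by auto
    then have "k \<le> p" unfolding p_def by (simp add: Max_ge)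
    with that show False by simp
  qed
  have "(U ** L)$p$j = (\<Sum>k\<in>UNIV. U$p$k * L$k$j)" by (simp add: matrix_matrix_mult_def)
  also have "\<dots> = (\<Sum>k\<in>UNIV. if k = p then U$p$p * L$p$j else 0)"
  proof (rule sum.cong[OF refl])
    fix k
    show "U$p$k * L$k$j = (if k = p then U$p$p * L$p$j else 0)"
      using up below_p[of k] by (cases k p rule: linorder_cases) (auto simp: upper_triangular_def)
  qed
  finally have "(U ** L)$p$j = U$p$p * L$p$j" by simp
  moreover have "(U ** L)$p$j = 0" using inv pB by (auto simp: mat_def dest: less_imp_neq)
  moreover have "det U \<noteq> 0" using inv det_mul[of U L] by auto
  then have "U$p$p \<noteq> 0"
    using det_upperdiagonal[of U] up by (auto simp: upper_triangular_def)
  ultimately show False using pB by simp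
qed

lemma copyltu_symmetric: "transpose (copyltu M) = copyltu M"
  by (simp add: copyltu_def transpose_def vec_eq_iff max.commute min.commute)

lemma trace_copyltu_mult_upper:
  fixes M T :: "real^('n::{finite,linorder})^('n::{finite,linorder})"
  assumes "upper_triangular T"
  shows "trace (copyltu M ** T) = trace (M ** T)"
  unfolding trace_def matrix_matrix_mult_def copyltu_def
proof (simp, intro sum.cong refl)
  fix i k :: 'n
  show "M $ max i k $ min i k * T $ k $ i = M $ i $ k * T $ k $ i"
    using assms by (cases "k \<le> i") (auto simp: max_def min_def upper_triangular_def)
qed

lemma qr_differential:
  assumes "open S" "A \<in> S"
    and QR: "\<And>A'. A' \<in> S \<Longrightarrow>
               orthogonal_matrix (Qf A') \<and> upper_triangular_wide (Rf A') \<and> A' = Qf A' ** Rf A'"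
    and dQ: "(Qf has_derivative DQ) (at A)" and dR: "(Rf has_derivative DR) (at A)"
  shows "DQ h ** Rf A + Qf A ** DR h = h"
    and "transpose (Qf A) ** DQ h + transpose (DQ h) ** Qf A = 0"
    and "upper_triangular_wide (DR h)"
proof -
  have "(\<lambda>h. Qf A ** DR h + DQ h ** Rf A) = (\<lambda>h. h)"
    by (rule has_derivative_unique_on_open[OF has_derivative_matrix_mult[OF dQ dR]
          has_derivative_ident \<open>open S\<close> \<open>A \<in> S\<close>])
       (use QR in auto)
  then show "DQ h ** Rf A + Qf A ** DR h = h" by (metis add.commute)
  have "(\<lambda>h. transpose (Qf A) ** DQ h + transpose (DQ h) ** Qf A) = (\<lambda>h. 0)"
    by (rule has_derivative_unique_on_open[OF has_derivative_matrix_mult[OF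
          bounded_linear.has_derivative[OF bounded_linear_transpose dQ] dQ]
          has_derivative_const[of "mat 1"] \<open>open S\<close> \<open>A \<in> S\<close>])
       (use QR in \<open>auto simp: orthogonal_matrix_def\<close>)
  then show "transpose (Qf A) ** DQ h + transpose (DQ h) ** Qf A = 0" by metis
  have "DR h $ i $ Inl j = 0" if "j < i" for i j
  proof -
    have "((\<lambda>x. Rf x $ i $ Inl j) has_derivative (\<lambda>h. DR h $ i $ Inl j)) (at A)"
      using bounded_linear.has_derivative[OF bounded_linear_vec_nth
             bounded_linear.has_derivative[OF bounded_linear_vec_nth dR]] .
    then have "(\<lambda>h. DR h $ i $ Inl j) = (\<lambda>h. 0)"
      by (rule has_derivative_unique_on_open[OF _ has_derivative_const[of 0] \<open>open S\<close> \<open>A \<in> S\<close>])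
         (use QR that in \<open>auto simp: upper_triangular_wide_def\<close>)
    then show ?thesis by metis
  qed
  then show "upper_triangular_wide (DR h)" by (simp add: upper_triangular_wide_def)
qed

text \<open>The square case of the theorem, with an arbitrary P in place of Qbar so that the wide
  case can take P = Qbar + Y Vbar^T.\<close>
lemma trace_square_qr_backward:
  fixes Q dQ U dU Ubar P :: "real^('m::{finite,wellorder})^('m::{finite,wellorder})"
  defines "M \<equiv> U ** transpose Ubar - transpose P ** Q"
  assumes orth: "transpose Q ** Q = mat 1"
    and skew: "transpose Q ** dQ + transpose dQ ** Q = 0"
    and "invertible U" "upper_triangular U" "upper_triangular dU"
  shows "trace (transpose ((P + Q ** copyltu M) ** transpose (matrix_inv U)) ** (dQ ** U + Q ** dU))
         = trace (transpose P ** dQ) + trace (transpose Ubar ** dU)"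
proof -
  define L where "L = matrix_inv U"
  define C where "C = copyltu M"
  define W where "W = transpose Q ** dQ"
  define T where "T = dU ** L"
  define G where "G = transpose P + C ** transpose Q"
  have UL: "U ** L = mat 1" "L ** U = mat 1"
    using matrix_inv_invertible[OF \<open>invertible U\<close>] by (simp_all add: L_def)
  have T_upper: "upper_triangular T"
    unfolding T_def
    using upper_triangular_mult[OF \<open>upper_triangular dU\<close>
        upper_triangular_right_inverse[OF \<open>upper_triangular U\<close> UL(1)]] .
  have W_skew: "transpose W = - W"
    using skew by (simp add: W_def matrix_transpose_mul eq_neg_iff_add_eq_0 add.commute)
  have "trace (transpose ((P + Q ** C) ** transpose L) ** (dQ ** U + Q ** dU))
      = trace (L ** (G ** dQ ** U)) + trace (L ** (G ** Q ** dU))"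
    by (simp add: G_def C_def matrix_transpose_mul transpose_add copyltu_symmetric
        matrix_add_ldistrib trace_add matrix_mul_assoc)
  also have "\<dots> = trace (G ** dQ) + trace (G ** Q ** T)"
    by (simp add: trace_mul_sym[of L] T_def UL flip: matrix_mul_assoc)
  finally have split: "trace (transpose ((P + Q ** C) ** transpose L) ** (dQ ** U + Q ** dU))
      = trace (G ** dQ) + trace (G ** Q ** T)" .
  have "trace (C ** W) = 0"
    using trace_symmetric_mult_skew[OF _ W_skew] by (simp add: C_def copyltu_symmetric)
  then have dQ_part: "trace (G ** dQ) = trace (transpose P ** dQ)"
    by (simp add: G_def W_def matrix_add_rdistrib trace_add flip: matrix_mul_assoc)
  have "G ** Q = transpose P ** Q + C"
    by (simp add: G_def matrix_add_rdistrib orth flip: matrix_mul_assoc)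
  then have "trace (G ** Q ** T) = trace (transpose P ** Q ** T) + trace (M ** T)"
    by (simp add: matrix_add_rdistrib trace_add C_def trace_copyltu_mult_upper[OF T_upper])
  also have "\<dots> = trace (U ** (transpose Ubar ** dU ** L))"
    by (simp add: M_def T_def matrix_diff_rdistrib trace_sub matrix_mul_assoc)
  also have "\<dots> = trace (transpose Ubar ** dU)"
    by (simp add: trace_mul_sym[of U] UL flip: matrix_mul_assoc)
  finally show ?thesis
    using split dQ_part by (simp add: C_def L_def)
qed

definition qr_backward ::
  "real^('m::{finite,linorder})^('m::{finite,linorder}) \<Rightarrow> real^(('m::{finite,linorder}) + ('k::finite))^('m::{finite,linorder}) \<Rightarrow> real^('m::{finite,linorder})^('m::{finite,linorder})
   \<Rightarrow> real^(('m::{finite,linorder}) + ('k::finite))^('m::{finite,linorder}) \<Rightarrow> real^(('m::{finite,linorder}) + ('k::finite))^('m::{finite,linorder})" where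
  "qr_backward Q R Qbar Rbar =
     (let U = left_block R; V = right_block R; Ubar = left_block Rbar; Vbar = right_block Rbar;
          Qbar' = Qbar + Q ** V ** transpose Vbar;
          M = U ** transpose Ubar - transpose Qbar' ** Q
      in hcat ((Qbar' + Q ** copyltu M) ** transpose (matrix_inv U)) (Q ** Vbar))"

lemma trace_qr_backward:
  fixes Q dQ Qbar :: "real^('m::{finite,wellorder})^('m::{finite,wellorder})"
    and R dR Rbar :: "real^(('m::{finite,wellorder}) + ('k::finite))^('m::{finite,wellorder})"
  assumes orth: "transpose Q ** Q = mat 1"
    and skew: "transpose Q ** dQ + transpose dQ ** Q = 0"
    and U_inv: "invertible (left_block R)"
    and R_upper: "upper_triangular_wide R" and dR_upper: "upper_triangular_wide dR"
  shows "trace (transpose (qr_backward Q R Qbar Rbar) ** (dQ ** R + Q ** dR))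
         = trace (transpose Qbar ** dQ) + trace (transpose Rbar ** dR)"
proof -
  define U where "U = left_block R"
  define V where "V = right_block R"
  define Ubar where "Ubar = left_block Rbar"
  define Vbar where "Vbar = right_block Rbar"
  define dU where "dU = left_block dR"
  define dV where "dV = right_block dR"
  define P where "P = Qbar + Q ** V ** transpose Vbar"
  define W where "W = transpose Q ** dQ"
  have W_skew: "transpose W = - W"
    using skew by (simp add: W_def matrix_transpose_mul eq_neg_iff_add_eq_0 add.commute)
  have blocks: "left_block (qr_backward Q R Qbar Rbar) =
        (P + Q ** copyltu (U ** transpose Ubar - transpose P ** Q)) ** transpose (matrix_inv U)"
      "right_block (qr_backward Q R Qbar Rbar) = Q ** Vbar"
      "left_block (dQ ** R + Q ** dR) = dQ ** U + Q ** dU"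
      "right_block (dQ ** R + Q ** dR) = dQ ** V + Q ** dV"
    by (simp_all add: qr_backward_def Let_def U_def V_def Ubar_def Vbar_def dU_def dV_def P_def
        left_block_add left_block_mult right_block_add right_block_mult)
  have "trace (transpose P ** dQ) = trace (transpose Qbar ** dQ) + trace (Vbar ** transpose V ** W)"
    by (simp add: P_def W_def transpose_add matrix_add_rdistrib trace_add matrix_transpose_mul
        matrix_mul_assoc)
  then have left: "trace (transpose (left_block (qr_backward Q R Qbar Rbar)) ** left_block (dQ ** R + Q ** dR))
      = trace (transpose Qbar ** dQ) + trace (Vbar ** transpose V ** W) + trace (transpose Ubar ** dU)"
    using trace_square_qr_backward[where U = U and dU = dU and Ubar = Ubar and P = P, OF orth skew] U_inv R_upper dR_upper
    by (simp add: blocks U_def dU_def upper_triangular_wide_iff)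
  have "trace (transpose (right_block (qr_backward Q R Qbar Rbar)) ** right_block (dQ ** R + Q ** dR))
      = trace (transpose Vbar ** W ** V) + trace (transpose Vbar ** (transpose Q ** Q) ** dV)"
    by (simp add: blocks W_def matrix_transpose_mul matrix_add_ldistrib trace_add matrix_mul_assoc)
  also have "trace (transpose Vbar ** W ** V) = - trace (Vbar ** transpose V ** W)"
    using trace_transpose_mult_skew[OF W_skew, of "Vbar ** transpose V"]
    by (simp add: trace_mul_sym[of _ V] matrix_transpose_mul matrix_mul_assoc)
  finally show ?thesis
    using left trace_transpose_mult_blocks[of "qr_backward Q R Qbar Rbar"]
      trace_transpose_mult_blocks[of Rbar dR] by (simp add: orth Ubar_def Vbar_def dU_def dV_def)
qed

theorem proposition2:
  fixes A :: "real^(('m::{finite,wellorder}) + ('k::finite))^('m::{finite,wellorder})"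
    and Qf :: "real^(('m::{finite,wellorder}) + ('k::finite))^('m::{finite,wellorder}) \<Rightarrow> real^('m::{finite,wellorder})^('m::{finite,wellorder})"
    and Rf :: "real^(('m::{finite,wellorder}) + ('k::finite))^('m::{finite,wellorder}) \<Rightarrow> real^(('m::{finite,wellorder}) + ('k::finite))^('m::{finite,wellorder})"
    and DQ :: "real^(('m::{finite,wellorder}) + ('k::finite))^('m::{finite,wellorder}) \<Rightarrow> real^('m::{finite,wellorder})^('m::{finite,wellorder})"
    and DR :: "real^(('m::{finite,wellorder}) + ('k::finite))^('m::{finite,wellorder}) \<Rightarrow> real^(('m::{finite,wellorder}) + ('k::finite))^('m::{finite,wellorder})"
    and S :: "(real^(('m::{finite,wellorder}) + ('k::finite))^('m::{finite,wellorder})) set"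
    and Qbar :: "real^('m::{finite,wellorder})^('m::{finite,wellorder})"
    and Rbar :: "real^(('m::{finite,wellorder}) + ('k::finite))^('m::{finite,wellorder})"
  assumes X_inv: "invertible (left_block A)"
    and S_open: "open S" and A_in_S: "A \<in> S"
    and QR: "\<And>A'. A' \<in> S \<Longrightarrow>
               orthogonal_matrix (Qf A') \<and> upper_triangular_wide (Rf A') \<and> A' = Qf A' ** Rf A'"
    and dQ: "(Qf has_derivative DQ) (at A)"
    and dR: "(Rf has_derivative DR) (at A)"
  shows "let X = left_block A; Y = right_block A; Q = Qf A;
             U = left_block (Rf A);
             Ubar = left_block Rbar; Vbar = right_block Rbar;
             Qbar_prime = Qbar + Y ** transpose Vbar;
             M = U ** transpose Ubar - transpose Qbar_prime ** Q;
             Xbar = (Qbar_prime + Q ** copyltu M) ** transpose (matrix_inv U);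
             Ybar = Q ** Vbar
         in is_reverse_gradient DQ DR Qbar Rbar (hcat Xbar Ybar)"
proof -
  have A_QR: "orthogonal_matrix (Qf A)" "upper_triangular_wide (Rf A)" "A = Qf A ** Rf A"
    using QR[OF A_in_S] by auto
  have A_blocks: "left_block A = Qf A ** left_block (Rf A)" "right_block A = Qf A ** right_block (Rf A)"
    using left_block_mult right_block_mult A_QR(3) by metis+
  have U_inv: "invertible (left_block (Rf A))"
    using X_inv A_blocks(1) by (metis det_mul invertible_det_nz mult_zero_right)
  have orth: "transpose (Qf A) ** Qf A = mat 1"
    using A_QR(1) by (simp add: orthogonal_matrix_def)
  have dA: "DQ h ** Rf A + Qf A ** DR h = h"
      "transpose (Qf A) ** DQ h + transpose (DQ h) ** Qf A = 0"
      "upper_triangular_wide (DR h)" for h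
    using qr_differential[OF S_open A_in_S QR dQ dR] by simp_all
  have "trace (transpose (qr_backward (Qf A) (Rf A) Qbar Rbar) ** h)
      = trace (transpose Qbar ** DQ h) + trace (transpose Rbar ** DR h)" for h
    using trace_qr_backward[where Qbar = Qbar and Rbar = Rbar,
        OF orth dA(2)[of h] U_inv A_QR(2) dA(3)[of h]]
    by (simp only: dA(1))
  then show ?thesis
    by (simp add: is_reverse_gradient_def qr_backward_def Let_def A_blocks(2))
qed

end
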